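(* Consider the bidding-club model described in the context, and an agent $i$ who belongs to a bidding club of size $k\ge 2$. Compare two situations. - Situation (a): agents play the equilibrium in which all invited agents accept and truthfully report their valuations, and singletons bid $b^e(v,P^{n,1})$ after the announcement $n$. - Situation (b): agent $i$'s bidding club does not exist, and its $k$ agents (including $i$) participate directly in the main auction as singleton bidders. In this situation all agents follow the same strategies as in (a): singletons bid $b^e(v,P^{n',1})$, where $n'$ is the announced number of registered bidders, and members of other clubs accept and report truthfully. Then agent $i$'s expected utility in situation (a) is higher than in situation (b).
   Context: A single indivisible good is sold by a first-price auction with participation revelation. The auction proceeds as follows: (i) agents register; (ii) the auctioneer announces the number $n$ of registered bidders; (iii) registered bidders submit sealed bids; (iv) the highest bidder wins and pays his bid, and all others pay $0$. There is no participation fee. Agents are risk-neutral with independent private valuations drawn i.i.d. from a continuous, atomless cumulative distribution function $F$ on the nonnegative reals. A winner with valuation $v$ paying $t$ gets utility $v-t$; a non-winner paying $t$ gets utility $-t$. For an integer $m\ge2$ define $b^e(v,m)=v-F(v)^{-(m-1)}\int_0^vF(u)^{m-1}du$. For a distribution $P=(p_j)$ on the number of agents define $b^e(v,P)=\sum_{j\ge2}p_jb^e(v,j)$. Write $P_{x\ge i}=\sum_{x\ge i}p_x$. Write $P<P'$ iff there is $l$ with $P_{x\ge i}=P'_{x\ge i}$ for all $i<l$ and $P_{x\ge i}<P'_{x\ge i}$ for all $i\ge l$. Standing assumption: $P<P'$ implies $b^e(v,P)<b^e(v,P')$ for all $v$. Environment. The number $n_c$ of potential coordinators has distribution $\gamma_C$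 with $\gamma_C(0)=\gamma_C(1)=0$. Independently, each potential coordinator is associated with a random number of agents with common distribution $\gamma_A$ on $\{1,\dots,\kappa\}$, where $\kappa\ge2$, $\gamma_A(0)=0$ and $\gamma_A(1)<1$. - A potential coordinator with one agent yields a singleton bidder. - A potential coordinator with at least two agents is a bidding club whose agents are all invited. Each agent privately knows his valuation and his club size $s_i$ ($1$ for singletons). All of this is common knowledge. $P^{n,k}$ denotes the distribution of $k+X_1+\dots+X_{n-1}$, where the $X_j$ are i.i.d. with distribution $\gamma_A$. Coordinator protocol for a club of $k$ invited agents: - Each agent declines (and bids independently) or accepts and reports a binding valuation $\mu_i$. - If some agent declines, every accepting agent is registered. After the announcement $n$, the coordinator bids $b^e(\mu_i,P^{n,k})$ for each accepting agent $i$. - If all accept, only the highest reporter $h$ is registered, with bid $b^e(\mu_h,P^{n,1})$. If $h$ wins, he pays that bid to the auctioneer plus $b^e(\mu_h,P^{n,k})-b^e(\mu_h,P^{n,1})$ to the coordinator. *)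

theory Defs
  imports "HOL-Probability.Probability"
begin

text \<open>Equilibrium bid of a first-price auction with m bidders:
  b^e(v,m) = v - F(v)^(-(m-1)) * integral_0^v F(u)^(m-1) du.\<close>
definition be :: "(real \<Rightarrow> real) \<Rightarrow> real \<Rightarrow> nat \<Rightarrow> real" where
  "be F v m = v - inverse (F v ^ (m - 1)) * integral {0..v} (\<lambda>u. F u ^ (m - 1))"

definition beP :: "(real \<Rightarrow> real) \<Rightarrow> real \<Rightarrow> nat pmf \<Rightarrow> real" where
  "beP F v P = infsum (\<lambda>j. pmf P j * be F v j) {2..}"

definition tail :: "nat pmf \<Rightarrow> nat \<Rightarrow> real" where
  "tail P i = measure_pmf.prob P {i..}"

definition dist_less :: "nat pmf \<Rightarrow> nat pmf \<Rightarrow> bool" where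
  "dist_less P P' \<longleftrightarrow> (\<exists>l. (\<forall>i<l. tail P i = tail P' i) \<and> 0 < tail P' l \<and>
      (\<forall>i\<ge>l. tail P i < tail P' i \<or> (tail P i = 0 \<and> tail P' i = 0)))"

fun sum_iid :: "nat pmf \<Rightarrow> nat \<Rightarrow> nat pmf" where
  "sum_iid g 0 = return_pmf 0"
| "sum_iid g (Suc m) = bind_pmf (sum_iid g m) (\<lambda>s. map_pmf (\<lambda>x. s + x) g)"

definition Pnk :: "nat pmf \<Rightarrow> nat \<Rightarrow> nat \<Rightarrow> nat pmf" where
  "Pnk gA n k = map_pmf (\<lambda>s. k + s) (sum_iid gA (n - 1))"

text \<open>Random environment as seen by agent i (whose club has size k):
  (nc, sz, vals, mates) where nc ~ gamma_C is the number of potential coordinators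
  (agent i's coordinator being one of them), sz j ~ gamma_A (i.i.d.) is the number of
  agents of the j-th other coordinator (j < nc - 1), vals j t ~ F (i.i.d.) the valuation of
  its t-th agent (t < sz j), and mates t ~ F (i.i.d.) the valuation of i's t-th club-mate
  (t < k - 1).\<close>
type_synonym env_state = "nat \<times> (nat \<Rightarrow> nat) \<times> (nat \<Rightarrow> nat \<Rightarrow> real) \<times> (nat \<Rightarrow> real)"

definition env :: "nat pmf \<Rightarrow> nat pmf \<Rightarrow> real measure \<Rightarrow> env_state measure" where
  "env gC gA M = measure_pmf gC \<Otimes>\<^sub>M (PiM UNIV (\<lambda>_::nat. measure_pmf gA) \<Otimes>\<^sub>M
      (PiM UNIV (\<lambda>_::nat. PiM UNIV (\<lambda>_::nat. M)) \<Otimes>\<^sub>M PiM UNIV (\<lambda>_::nat. M)))"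

text \<open>Every coordinator
  registers exactly one bidder (singleton or highest reporter of its club), so n = nc. Agent i is registered iff he is the highest reporter of his club; if he wins he pays
  his bid to the auctioneer and b^e(v,P^{n,k}) - b^e(v,P^{n,1}) to the coordinator.
  Ties (a null event) are resolved against agent i.\<close>
definition util_a :: "(real \<Rightarrow> real) \<Rightarrow> nat pmf \<Rightarrow> nat \<Rightarrow> real \<Rightarrow> env_state \<Rightarrow> real" where
  "util_a F gA k v \<omega> = (case \<omega> of (nc, sz, vals, mates) \<Rightarrow>
     let n = nc;
         bid = (\<lambda>w. beP F w (Pnk gA n 1));
         registered = (\<forall>t<k - 1. mates t < v);
         others = {bid (Max (vals j ` {..<sz j})) | j. j < nc - 1};
         wins = (registered \<and> (\<forall>b\<in>others. b < bid v));
         pay_auct = (if wins then bid v else 0);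
         pay_coord = (if wins then beP F v (Pnk gA n k) - bid v else 0)
     in (if wins then v else 0) - pay_auct - pay_coord)"

definition util_b :: "(real \<Rightarrow> real) \<Rightarrow> nat pmf \<Rightarrow> nat \<Rightarrow> real \<Rightarrow> env_state \<Rightarrow> real" where
  "util_b F gA k v \<omega> = (case \<omega> of (nc, sz, vals, mates) \<Rightarrow>
     let n' = (nc - 1) + k;
         bid = (\<lambda>w. beP F w (Pnk gA n' 1));
         others = {bid (Max (vals j ` {..<sz j})) | j. j < nc - 1}
                  \<union> {bid (mates t) | t. t < k - 1};
         wins = (\<forall>b\<in>others. b < bid v)
     in if wins then v - bid v else 0)"

end

theory Submission
  imports Defs
begin

(* Equilibrium bids are strictly increasing in the rank F v of the valuation, so in both
   situations agent i wins exactly when his rank beats those of his club-mates and of every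
   rival group. The price he pays in total is b^e(v, P^{n,k}) in (a) and b^e(v, P^{n-1+k,1})
   in (b). The second distribution arises from the first by letting the club's members, one
   at a time, turn into coordinators of random groups of their own; each such step moves a
   distribution strictly up in the order <, so by the standing assumption the price in (b) is
   strictly higher. Hence i's utility in (b) is pointwise at most that in (a), with a fixed
   positive gap on the event, of positive probability, that there are n coordinators, every
   rival group has s agents and all other valuations have small rank. *)

section \<open>Equilibrium bids\<close>

lemma beP_eq_sum:
  assumes "finite (set_pmf P)" and "set_pmf P \<subseteq> {2..}"
  shows "beP F w P = (\<Sum>j\<in>set_pmf P. pmf P j * be F w j)"
proof -
  have "beP F w P = infsum (\<lambda>j. pmf P j * be F w j) (set_pmf P)"
    unfolding beP_def using assms(2) by (intro infsum_cong_neutral) (auto simp: set_pmf_eq)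
  then show ?thesis using assms(1) by simp
qed

locale valuation_cdf =
  fixes F :: "real \<Rightarrow> real"
  assumes F_continuous: "\<And>x. isCont F x"
    and F_mono: "mono F"
    and F_vanishes: "\<And>x. x < 0 \<Longrightarrow> F x = 0"
begin

lemma F_nonneg: "0 \<le> F x"
proof (cases "x < 0")
  case False
  then have "F (-1) \<le> F x" using F_mono by (simp add: mono_def)
  then show ?thesis using F_vanishes[of "-1"] by simp
qed (simp add: F_vanishes)

lemma F_less_imp_less: "F x < F y \<Longrightarrow> x < y"
  using F_mono by (metis mono_def not_le order.strict_iff_not)

lemma F_pos_imp_nonneg: "0 < F v \<Longrightarrow> 0 \<le> v"
  using F_vanishes[of v] by force

lemma integrable_power: "(\<lambda>u. F u ^ n) integrable_on {a..b}"
  using F_continuous by (intro integrable_continuous_interval continuous_at_imp_continuous_on continuous_intros) auto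

lemma integral_power_le:
  assumes "a \<le> b"
  shows "integral {a..b} (\<lambda>u. F u ^ n) \<le> (b - a) * F b ^ n"
proof -
  have "integral {a..b} (\<lambda>u. F u ^ n) \<le> integral {a..b} (\<lambda>u. F b ^ n)"
    using F_mono F_nonneg by (intro integral_le integrable_power power_mono) (auto simp: mono_def)
  then show ?thesis using assms by simp
qed

lemma integral_power_nonneg: "0 \<le> integral {a..b} (\<lambda>u. F u ^ n)"
  by (intro integral_nonneg integrable_power) (simp add: F_nonneg)

text \<open>Continuity keeps F below F b just to the right of a, so the bound F b ^ n is
  not attained on a set of positive length.\<close>
lemma integral_power_less:
  assumes "a < b" and "F a < F b" and "0 < n"
  shows "integral {a..b} (\<lambda>u. F u ^ n) < (b - a) * F b ^ n"
proof -
  have "(F \<longlongrightarrow> F a) (at_right a)"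
    using F_continuous[of a] unfolding isCont_def by (rule tendsto_mono[OF at_le, rotated]) simp
  then have "\<forall>\<^sub>F u in at_right a. F u < F b"
    using assms(2) by (rule order_tendstoD(2))
  moreover have "\<forall>\<^sub>F u in at_right a. u \<in> {a<..<b}"
    using assms(1) by (rule eventually_at_right_real)
  ultimately have "\<exists>e. F e < F b \<and> e \<in> {a<..<b}"
    by (intro eventually_happens'[OF trivial_limit_at_right_real] eventually_conj)
  then obtain e where e: "a < e" "e < b" "F e < F b" by auto
  have "integral {a..b} (\<lambda>u. F u ^ n) = integral {a..e} (\<lambda>u. F u ^ n) + integral {e..b} (\<lambda>u. F u ^ n)"
    using e Henstock_Kurzweil_Integration.integral_combine[OF _ _ integrable_power, of a e b n] by simp
  also have "\<dots> \<le> (e - a) * F e ^ n + (b - e) * F b ^ n"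
    using e by (intro add_mono integral_power_le) auto
  also have "\<dots> < (e - a) * F b ^ n + (b - e) * F b ^ n"
    using e assms(3) F_nonneg by (simp add: power_strict_mono)
  finally show ?thesis by (simp add: algebra_simps)
qed

lemma be_diff_eq:
  assumes "0 \<le> a" and "a \<le> b"
  shows "be F b j - be F a j = (b - a) - inverse (F b ^ (j - 1)) * integral {a..b} (\<lambda>u. F u ^ (j - 1))
    + (inverse (F a ^ (j - 1)) - inverse (F b ^ (j - 1))) * integral {0..a} (\<lambda>u. F u ^ (j - 1))"
proof -
  have "integral {0..b} (\<lambda>u. F u ^ (j - 1))
      = integral {0..a} (\<lambda>u. F u ^ (j - 1)) + integral {a..b} (\<lambda>u. F u ^ (j - 1))"
    using assms Henstock_Kurzweil_Integration.integral_combine[OF _ _ integrable_power] by simp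
  then show ?thesis unfolding be_def by (simp add: algebra_simps)
qed

lemma inverse_power_diff_integral_nonneg:
  assumes "0 \<le> a" and "a \<le> b" and "0 < F b"
  shows "0 \<le> (inverse (F a ^ n) - inverse (F b ^ n)) * integral {0..a} (\<lambda>u. F u ^ n)"
proof (cases "0 < F a")
  case True
  have "F a ^ n \<le> F b ^ n"
    using assms(2) F_mono F_nonneg by (intro power_mono) (auto simp: mono_def)
  then have "inverse (F b ^ n) \<le> inverse (F a ^ n)"
    using True by (intro le_imp_inverse_le) auto
  then show ?thesis using integral_power_nonneg by simp
next
  case False
  then have "F a = 0" using F_nonneg[of a] by simp
  show ?thesis
  proof (cases n)
    case (Suc m)
    have "integral {0..a} (\<lambda>u. F u ^ n) \<le> 0"
      using integral_power_le[OF assms(1), of n] \<open>F a = 0\<close> Suc by simp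
    then show ?thesis using integral_power_nonneg[of 0 a n] by simp
  qed simp
qed

lemma be_bounds:
  assumes "0 \<le> v"
  shows "0 \<le> be F v j" and "be F v j \<le> v"
proof -
  let ?I = "integral {0..v} (\<lambda>u. F u ^ (j - 1))"
  have "0 \<le> inverse (F v ^ (j - 1)) * ?I \<and> inverse (F v ^ (j - 1)) * ?I \<le> v"
  proof (cases "F v ^ (j - 1) = 0")
    case False
    then have "0 < F v ^ (j - 1)" using F_nonneg[of v] by (simp add: order_less_le)
    moreover have "?I \<le> v * F v ^ (j - 1)" using integral_power_le[OF assms] by simp
    ultimately show ?thesis using integral_power_nonneg by (simp add: field_simps)
  qed (simp add: assms del: power_eq_0_iff)
  then show "0 \<le> be F v j" and "be F v j \<le> v" unfolding be_def by simp_all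
qed

lemma be_strict_mono:
  assumes "2 \<le> j" and "F x < F v"
  shows "be F x j < be F v j"
proof -
  have Fv: "0 < F v" using F_nonneg[of x] assms(2) by simp
  then have v: "0 \<le> v" by (rule F_pos_imp_nonneg)
  have xv: "x < v" using assms(2) by (rule F_less_imp_less)
  show ?thesis
  proof (cases "0 \<le> x")
    case False
    then have "be F x j = x" using assms(1) F_vanishes[of x] by (simp add: be_def)
    then show ?thesis using be_bounds(1)[OF v, of j] False by simp
  next
    case True
    have "integral {x..v} (\<lambda>u. F u ^ (j - 1)) < (v - x) * F v ^ (j - 1)"
      using assms by (intro integral_power_less xv) auto
    then have "inverse (F v ^ (j - 1)) * integral {x..v} (\<lambda>u. F u ^ (j - 1)) < v - x"
      using Fv by (simp add: field_simps)
    then show ?thesis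
      using be_diff_eq[OF True less_imp_le[OF xv], of j]
        inverse_power_diff_integral_nonneg[OF True less_imp_le[OF xv] Fv, of "j - 1"]
      by linarith
  qed
qed

text \<open>The bid depends on the valuation only through its rank F v: between two valuations of
  equal rank F is constant, so the extra integral exactly cancels the extra valuation.\<close>
lemma be_cong_le:
  assumes "a \<le> b" and "F a = F b" and "0 < F b"
  shows "be F a j = be F b j"
proof -
  have a: "0 \<le> a" using assms(2,3) by (intro F_pos_imp_nonneg) simp
  have "F u ^ (j - 1) = F b ^ (j - 1)" if u: "u \<in> {a..b}" for u
  proof -
    have "F a \<le> F u" "F u \<le> F b" using u F_mono by (auto simp: mono_def)
    then show ?thesis using assms(2) by simp
  qed
  then have "integral {a..b} (\<lambda>u. F u ^ (j - 1)) = integral {a..b} (\<lambda>u. F b ^ (j - 1))"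
    by (rule integral_cong)
  also have "\<dots> = (b - a) * F b ^ (j - 1)"
    using assms(1) by simp
  finally have "inverse (F b ^ (j - 1)) * integral {a..b} (\<lambda>u. F u ^ (j - 1)) = b - a"
    using assms(3) by simp
  then show ?thesis
    using be_diff_eq[OF a assms(1), of j] assms(2) by simp
qed

lemma be_cong:
  assumes "F x = F v" and "0 < F v"
  shows "be F x j = be F v j"
proof (cases "x \<le> v")
  case True
  then show ?thesis using be_cong_le[of x v j] assms by blast
next
  case False
  then have "v \<le> x" by simp
  then show ?thesis using be_cong_le[of v x j] assms by fastforce
qed

lemma be_less_iff:
  assumes "2 \<le> j" and "0 < F v"
  shows "be F x j < be F v j \<longleftrightarrow> F x < F v"
proof
  assume less: "be F x j < be F v j"
  show "F x < F v"
  proof (rule ccontr)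
    assume "\<not> F x < F v"
    then have "F v < F x \<or> F x = F v" by auto
    then have "be F v j \<le> be F x j"
      using be_strict_mono[OF assms(1), of v x] be_cong[OF _ assms(2), of x j] by auto
    then show False using less by simp
  qed
qed (rule be_strict_mono[OF assms(1)])

lemma beP_bounds:
  assumes "finite (set_pmf P)" and "set_pmf P \<subseteq> {2..}" and "0 \<le> v"
  shows "0 \<le> beP F v P" and "beP F v P \<le> v"
proof -
  have "(\<Sum>j\<in>set_pmf P. pmf P j * be F v j) \<le> (\<Sum>j\<in>set_pmf P. pmf P j * v)"
    using be_bounds(2)[OF assms(3)] by (intro sum_mono mult_left_mono) auto
  also have "\<dots> = v"
    using sum_pmf_eq_1[OF assms(1) order_refl] by (simp add: sum_distrib_right[symmetric])
  finally show "beP F v P \<le> v" using beP_eq_sum[OF assms(1,2)] by simp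
  show "0 \<le> beP F v P"
    unfolding beP_eq_sum[OF assms(1,2)] using be_bounds(1)[OF assms(3)] by (intro sum_nonneg) auto
qed

lemma beP_less_iff:
  assumes "finite (set_pmf P)" and "set_pmf P \<subseteq> {2..}" and "0 < F v"
  shows "beP F x P < beP F v P \<longleftrightarrow> F x < F v"
proof
  assume "F x < F v"
  then show "beP F x P < beP F v P"
    unfolding beP_eq_sum[OF assms(1,2)] using assms(2)
    by (intro sum_strict_mono assms(1) set_pmf_not_empty mult_strict_left_mono be_strict_mono)
      (auto simp: pmf_positive)
next
  assume less: "beP F x P < beP F v P"
  show "F x < F v"
  proof (rule ccontr)
    assume "\<not> F x < F v"
    then have "be F v j \<le> be F x j" if "j \<in> set_pmf P" for j
      using that assms(2) be_less_iff[OF _ assms(3), of j x] by auto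
    then have "beP F v P \<le> beP F x P"
      unfolding beP_eq_sum[OF assms(1,2)] by (intro sum_mono mult_left_mono) auto
    then show False using less by simp
  qed
qed

lemma obtain_F_between:
  assumes "0 < F v"
  obtains c where "0 < F c" and "F c < F v"
proof -
  have "-1 \<le> v" using F_pos_imp_nonneg[OF assms] by simp
  moreover have "continuous_on {-1..v} F" using F_continuous by (simp add: continuous_at_imp_continuous_on)
  ultimately obtain c where "F c = F v / 2"
    using IVT'[of F "-1" "F v / 2" v] F_vanishes[of "-1"] assms by auto
  then show ?thesis using assms by (intro that[of c]) auto
qed

end

lemma valuation_cdf_cdf:
  assumes "real_distribution M" and "\<forall>x. isCont (cdf M) x" and "\<forall>x<0. cdf M x = 0"
  shows "valuation_cdf (cdf M)"
proof -
  interpret real_distribution M by (rule assms(1))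
  show ?thesis using assms(2,3) by unfold_locales (auto simp: mono_def cdf_nondecreasing)
qed

section \<open>Splitting a club raises the distribution of the number of agents\<close>

lemma measure_pmf_finite_eq_sum:
  assumes "finite (set_pmf Q)"
  shows "measure_pmf.prob Q A = (\<Sum>q\<in>set_pmf Q. pmf Q q * indicator A q)"
proof -
  have "measure_pmf.prob Q A = (\<integral>q. indicator A q \<partial>measure_pmf Q)" by simp
  also have "\<dots> = (\<Sum>q\<in>set_pmf Q. indicator A q * pmf Q q)"
    using assms by (rule integral_measure_pmf_real) auto
  finally show ?thesis by (simp add: mult.commute)
qed

lemma measure_bind_pmf_finite_eq_sum:
  assumes "finite (set_pmf Q)"
  shows "measure_pmf.prob (bind_pmf Q f) A = (\<Sum>q\<in>set_pmf Q. pmf Q q * measure_pmf.prob (f q) A)"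
proof -
  have "measure_pmf.prob (bind_pmf Q f) A = (\<integral>q. measure_pmf.prob (f q) A \<partial>measure_pmf Q)"
    unfolding measure_pmf_bind
    by (rule measure_pmf.measure_bind[where N="count_space UNIV"])
      (auto simp: measurable_pmf_measure2 space_subprob_algebra intro: measure_pmf.subprob_space_axioms)
  also have "\<dots> = (\<Sum>q\<in>set_pmf Q. measure_pmf.prob (f q) A * pmf Q q)"
    using assms by (rule integral_measure_pmf_real) auto
  finally show ?thesis by (simp add: mult.commute)
qed

lemma finite_set_pmf_sum_iid: "finite (set_pmf g) \<Longrightarrow> finite (set_pmf (sum_iid g m))"
  by (induction m) auto

lemma set_pmf_sum_iid_subset: "set_pmf g \<subseteq> {1..} \<Longrightarrow> set_pmf (sum_iid g m) \<subseteq> {m..}"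
proof (induction m)
  case (Suc m)
  then show ?case by force
qed simp

definition bounded_gaps :: "nat \<Rightarrow> nat set \<Rightarrow> bool" where
  "bounded_gaps D A \<longleftrightarrow> (\<forall>a\<in>A. (\<exists>b\<in>A. a < b) \<longrightarrow> (\<exists>b\<in>A. a < b \<and> b \<le> a + D))"

lemma bounded_gaps_sumset:
  assumes A: "bounded_gaps D A" and B: "bounded_gaps D B"
  shows "bounded_gaps D (\<Union>a\<in>A. (\<lambda>b. a + b) ` B)"
  unfolding bounded_gaps_def
proof (intro ballI impI)
  fix c assume "c \<in> (\<Union>a\<in>A. (\<lambda>b. a + b) ` B)" and "\<exists>d\<in>(\<Union>a\<in>A. (\<lambda>b. a + b) ` B). c < d"
  then obtain a b a' b' where ab: "a \<in> A" "b \<in> B" "c = a + b" and ab': "a' \<in> A" "b' \<in> B" "c < a' + b'"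
    by auto
  show "\<exists>d\<in>(\<Union>a\<in>A. (\<lambda>b. a + b) ` B). c < d \<and> d \<le> c + D"
  proof (cases "\<exists>a2\<in>A. a < a2")
    case True
    then obtain a3 where "a3 \<in> A" "a < a3" "a3 \<le> a + D" using A ab unfolding bounded_gaps_def by blast
    then show ?thesis using ab by (intro bexI[of _ "a3 + b"]) auto
  next
    case False
    then have "a' \<le> a" using ab'(1) by (meson not_le)
    then have "b < b'" using ab(3) ab'(3) by linarith
    then obtain b3 where "b3 \<in> B" "b < b3" "b3 \<le> b + D" using B ab ab' unfolding bounded_gaps_def by blast
    then show ?thesis using ab by (intro bexI[of _ "a + b3"]) auto
  qed
qed

lemma bounded_gaps_image_add: "bounded_gaps D A \<Longrightarrow> bounded_gaps D ((\<lambda>s. c + s) ` A)"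
  unfolding bounded_gaps_def by fastforce

lemma bounded_gaps_sum_iid:
  assumes "bounded_gaps D (set_pmf g)"
  shows "bounded_gaps D (set_pmf (sum_iid g m))"
proof (induction m)
  case (Suc m)
  then show ?case using bounded_gaps_sumset[OF Suc assms] by simp
qed (simp add: bounded_gaps_def)

lemma bounded_gaps_atLeastAtMost:
  assumes "A \<subseteq> {1..m}" and "m \<in> A"
  shows "bounded_gaps (m - 1) A"
  unfolding bounded_gaps_def
proof (intro ballI impI)
  fix a assume "a \<in> A" and "\<exists>b\<in>A. a < b"
  then have "1 \<le> a" "a < m" using assms(1) by force+
  then show "\<exists>b\<in>A. a < b \<and> b \<le> a + (m - 1)" using assms(2) by (intro bexI[of _ m]) auto
qed

text \<open>In bind_pmf Q (\<lambda>q. map_pmf (\<lambda>x. q + x - 1) g) one of the q agents counted by Q is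
  replaced by a coordinator with x \<ge> 1 agents, x drawn from g.\<close>
lemma tail_bind_add_minus_one:
  fixes Q g :: "nat pmf"
  assumes g: "set_pmf g \<subseteq> {1..}" and m: "m \<in> set_pmf g" and Q: "finite (set_pmf Q)"
  defines "R \<equiv> bind_pmf Q (\<lambda>q. map_pmf (\<lambda>x. q + x - 1) g)"
  shows "tail Q i \<le> tail R i"
    and "(\<And>q. q \<in> set_pmf Q \<Longrightarrow> i \<le> q) \<Longrightarrow> tail Q i = tail R i"
    and "q \<in> set_pmf Q \<Longrightarrow> q < i \<Longrightarrow> i \<le> q + (m - 1) \<Longrightarrow> tail Q i < tail R i"
proof -
  define h where "h i q = measure_pmf.prob g {x. i \<le> q + x - 1}" for i q
  have tail_Q: "tail Q i = (\<Sum>q\<in>set_pmf Q. pmf Q q * indicator {i..} q)" for i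
    unfolding tail_def by (rule measure_pmf_finite_eq_sum[OF Q])
  have tail_R: "tail R i = (\<Sum>q\<in>set_pmf Q. pmf Q q * h i q)" for i
    unfolding tail_def R_def h_def by (simp add: measure_bind_pmf_finite_eq_sum[OF Q] vimage_def)
  have h_eq: "h i q = 1" if "i \<le> q" for i q
    unfolding h_def using that g by (subst measure_pmf.prob_eq_1) (auto simp: AE_measure_pmf_iff)
  have indicator_le_h: "indicator {i..} q \<le> h i q" for i q
    using h_eq[of i q] by (cases "i \<le> q") (auto simp: h_def)
  have indicator_less_h: "indicator {i..} q < h i q" if "q < i" "i \<le> q + (m - 1)" for i q
  proof -
    have "0 < pmf g m" using m by (simp add: pmf_positive)
    also have "pmf g m \<le> h i q"
      unfolding h_def measure_pmf_single[symmetric] using that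
      by (intro measure_pmf.finite_measure_mono) auto
    finally show ?thesis using that by simp
  qed
  show "tail Q i \<le> tail R i"
    unfolding tail_Q tail_R by (intro sum_mono mult_left_mono indicator_le_h) auto
  show "tail Q i = tail R i" if "\<And>q. q \<in> set_pmf Q \<Longrightarrow> i \<le> q"
    unfolding tail_Q tail_R using that by (intro sum.cong refl) (simp add: h_eq)
  show "tail Q i < tail R i" if q: "q \<in> set_pmf Q" "q < i" "i \<le> q + (m - 1)"
    unfolding tail_Q tail_R
  proof (rule sum_strict_mono_ex1[OF Q])
    show "\<forall>x\<in>set_pmf Q. pmf Q x * indicator {i..} x \<le> pmf Q x * h i x"
      by (intro ballI mult_left_mono indicator_le_h) auto
    show "\<exists>a\<in>set_pmf Q. pmf Q a * indicator {i..} a < pmf Q a * h i a"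
      using q indicator_less_h[OF q(2,3)] by (intro bexI[of _ q]) (auto simp: pmf_positive)
  qed
qed

text \<open>Strictness at a level i above the least point of Q comes from the largest point of Q
  below i: the gap bound puts i within reach m - 1 of it.\<close>
lemma dist_less_bind_add_minus_one:
  fixes Q g :: "nat pmf"
  assumes g: "set_pmf g \<subseteq> {1..m}" "m \<in> set_pmf g" "2 \<le> m"
    and Q: "finite (set_pmf Q)" "bounded_gaps (m - 1) (set_pmf Q)"
  shows "dist_less Q (bind_pmf Q (\<lambda>q. map_pmf (\<lambda>x. q + x - 1) g))"
proof -
  have "set_pmf g \<subseteq> {1..}" using g(1) by auto
  note tail = tail_bind_add_minus_one[OF this g(2) Q(1)]
  define q0 where "q0 = Min (set_pmf Q)"
  have q0: "q0 \<in> set_pmf Q" "\<And>q. q \<in> set_pmf Q \<Longrightarrow> q0 \<le> q"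
    unfolding q0_def using Q(1) set_pmf_not_empty[of Q] by auto
  show ?thesis
    unfolding dist_less_def
  proof (intro exI[of _ "q0 + 1"] conjI allI impI)
    fix i assume "i < q0 + 1"
    then show "tail Q i = tail (bind_pmf Q (\<lambda>q. map_pmf (\<lambda>x. q + x - 1) g)) i"
      using q0(2) by (intro tail(2)) force
  next
    have "tail Q (q0 + 1) < tail (bind_pmf Q (\<lambda>q. map_pmf (\<lambda>x. q + x - 1) g)) (q0 + 1)"
      using g(3) by (intro tail(3)[OF q0(1)]) auto
    then show "0 < tail (bind_pmf Q (\<lambda>q. map_pmf (\<lambda>x. q + x - 1) g)) (q0 + 1)"
      unfolding tail_def by (meson measure_nonneg order.strict_trans1)
  next
    fix i assume i: "q0 + 1 \<le> i"
    show "tail Q i < tail (bind_pmf Q (\<lambda>q. map_pmf (\<lambda>x. q + x - 1) g)) i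
      \<or> (tail Q i = 0 \<and> tail (bind_pmf Q (\<lambda>q. map_pmf (\<lambda>x. q + x - 1) g)) i = 0)"
    proof (cases "\<exists>q'\<in>set_pmf Q. i \<le> q'")
      case False
      then have "tail Q i = 0"
        unfolding tail_def using measure_pmf_finite_eq_sum[OF Q(1)] by (auto intro: sum.neutral)
      then show ?thesis using tail(1)[of i] by auto
    next
      case True
      define q where "q = Max {q\<in>set_pmf Q. q < i}"
      have below: "finite {q\<in>set_pmf Q. q < i}" "q0 \<in> {q\<in>set_pmf Q. q < i}"
        using Q(1) q0(1) i by auto
      then have "q \<in> {q\<in>set_pmf Q. q < i}" unfolding q_def by (intro Max_in) auto
      then have q: "q \<in> set_pmf Q" "q < i" by simp_all
      have q_max: "b \<le> q" if "b \<in> set_pmf Q" "b < i" for b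
        unfolding q_def using below that by (intro Max_ge) auto
      obtain b where b: "b \<in> set_pmf Q" "q < b" "b \<le> q + (m - 1)"
        using Q(2) q True unfolding bounded_gaps_def by (meson less_le_trans)
      then have "i \<le> b" using q_max by (meson leD leI)
      then show ?thesis using tail(3)[OF q] b(3) by simp
    qed
  qed
qed

lemma Pnk_remove_member:
  assumes "j < k - 1"
  shows "map_pmf (\<lambda>s. (k - Suc j) + s) (sum_iid g (n + Suc j))
       = bind_pmf (map_pmf (\<lambda>s. (k - j) + s) (sum_iid g (n + j))) (\<lambda>q. map_pmf (\<lambda>x. q + x - 1) g)"
proof -
  have "map_pmf (\<lambda>s. (k - Suc j) + s) (sum_iid g (n + Suc j))
      = bind_pmf (sum_iid g (n + j)) (\<lambda>s. map_pmf (\<lambda>x. (k - Suc j) + (s + x)) g)"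
    by (simp add: map_bind_pmf map_pmf_comp)
  also have "\<dots> = bind_pmf (sum_iid g (n + j)) (\<lambda>s. map_pmf (\<lambda>x. (k - j) + s + x - 1) g)"
    using assms by (intro bind_pmf_cong refl map_pmf_cong) auto
  finally show ?thesis by (simp add: bind_map_pmf)
qed

lemma Pnk_less_split_club:
  fixes \<phi> :: "nat pmf \<Rightarrow> real"
  assumes \<phi>: "\<And>P P'. set_pmf P \<subseteq> {2..} \<Longrightarrow> set_pmf P' \<subseteq> {2..} \<Longrightarrow> dist_less P P' \<Longrightarrow> \<phi> P < \<phi> P'"
    and g: "set_pmf g \<subseteq> {1..m}" "m \<in> set_pmf g" "2 \<le> m"
    and n: "1 \<le> n" and k: "2 \<le> k"
  shows "\<phi> (Pnk g n k) < \<phi> (Pnk g (n - 1 + k) 1)"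
proof -
  \<comment> \<open>R j: j members have left the club, each to coordinate a random group of their own\<close>
  define R where "R j = map_pmf (\<lambda>s. (k - j) + s) (sum_iid g (n - 1 + j))" for j
  have R_ge_2: "set_pmf (R j) \<subseteq> {2..}" if "j \<le> k - 1" for j
  proof -
    have "set_pmf (sum_iid g (n - 1 + j)) \<subseteq> {n - 1 + j..}"
      using g(1) by (intro set_pmf_sum_iid_subset) auto
    then show ?thesis using that n k unfolding R_def by force
  qed
  have fin: "finite (set_pmf g)" using g(1) by (rule finite_subset) simp
  have step: "\<phi> (R j) < \<phi> (R (Suc j))" if j: "j < k - 1" for j
  proof (rule \<phi>)
    show "set_pmf (R j) \<subseteq> {2..}" "set_pmf (R (Suc j)) \<subseteq> {2..}" using R_ge_2 j by auto
    have "bounded_gaps (m - 1) (set_pmf (R j))"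
      unfolding R_def using bounded_gaps_atLeastAtMost[OF g(1,2)]
      by (simp add: bounded_gaps_image_add bounded_gaps_sum_iid)
    moreover have "finite (set_pmf (R j))" unfolding R_def by (simp add: finite_set_pmf_sum_iid[OF fin])
    ultimately have "dist_less (R j) (bind_pmf (R j) (\<lambda>q. map_pmf (\<lambda>x. q + x - 1) g))"
      using g by (intro dist_less_bind_add_minus_one)
    then show "dist_less (R j) (R (Suc j))"
      unfolding R_def using Pnk_remove_member[OF j, of g "n - 1"] by simp
  qed
  have "\<phi> (R 0) < \<phi> (R (Suc j))" if "j < k - 1" for j
    using that
  proof (induction j)
    case (Suc j)
    then show ?case using step[of "Suc j"] by simp
  qed (use step in simp)
  from this[of "k - 2"] have "\<phi> (R 0) < \<phi> (R (k - 1))"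
    using k by (simp add: Suc_diff_Suc numeral_2_eq_2)
  moreover have "R 0 = Pnk g n k" "R (k - 1) = Pnk g (n - 1 + k) 1"
    unfolding R_def Pnk_def using n k by simp_all
  ultimately show ?thesis by simp
qed

lemma set_pmf_Pnk_subset: "set_pmf g \<subseteq> {1..} \<Longrightarrow> set_pmf (Pnk g n k) \<subseteq> {k + (n - 1)..}"
  unfolding Pnk_def using set_pmf_sum_iid_subset[of g "n - 1"] by auto

lemma finite_set_pmf_Pnk: "finite (set_pmf g) \<Longrightarrow> finite (set_pmf (Pnk g n k))"
  unfolding Pnk_def by (simp add: finite_set_pmf_sum_iid)

lemma set_pmf_Max:
  fixes g :: "nat pmf"
  assumes "set_pmf g \<subseteq> {1..kappa}" and "pmf g 1 < 1"
  shows "set_pmf g \<subseteq> {1..Max (set_pmf g)}" and "Max (set_pmf g) \<in> set_pmf g"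
    and "2 \<le> Max (set_pmf g)"
proof -
  have fin: "finite (set_pmf g)" using assms(1) by (rule finite_subset) simp
  then show "set_pmf g \<subseteq> {1..Max (set_pmf g)}" "Max (set_pmf g) \<in> set_pmf g"
    using assms(1) set_pmf_not_empty[of g] by auto
  have "\<not> set_pmf g \<subseteq> {1}"
    using assms(2) set_pmf_subset_singleton[of g 1] by auto
  then obtain x where x: "x \<in> set_pmf g" "x \<noteq> 1" by blast
  then have "1 \<le> x" using assms(1) by auto
  moreover have "x \<le> Max (set_pmf g)" using fin x(1) by (rule Max_ge)
  ultimately show "2 \<le> Max (set_pmf g)" using x(2) by linarith
qed

section \<open>Utilities in the two situations\<close>

text \<open>A group with sz j = 0 (a null event) enters through the junk value Max {}, exactly as
  in util_a and util_b.\<close>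
definition rivals_below :: "(real \<Rightarrow> real) \<Rightarrow> real \<Rightarrow> nat \<Rightarrow> (nat \<Rightarrow> nat) \<Rightarrow> (nat \<Rightarrow> nat \<Rightarrow> real) \<Rightarrow> bool"
  where "rivals_below F v nc sz vals \<longleftrightarrow> (\<forall>j<nc - 1. F (Max (vals j ` {..<sz j})) < F v)"

definition low_rivals_event :: "nat \<Rightarrow> nat \<Rightarrow> real \<Rightarrow> nat \<Rightarrow> env_state set" where
  "low_rivals_event n s c k = {n} \<times> ({sz. \<forall>j<n - 1. sz j = s} \<times>
     ({vals. \<forall>j<n - 1. vals j \<in> {f. \<forall>t<s. f t \<in> {..c}}} \<times> {mates. \<forall>t<k - 1. mates t \<in> {..c}}))"

context valuation_cdf
begin

lemma beP_Pnk_less_iff: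
  assumes "set_pmf g \<subseteq> {1..}" and "finite (set_pmf g)" and "2 \<le> k + (n - 1)" and "0 < F v"
  shows "beP F x (Pnk g n k) < beP F v (Pnk g n k) \<longleftrightarrow> F x < F v"
  using assms set_pmf_Pnk_subset[OF assms(1), of n k]
  by (intro beP_less_iff finite_set_pmf_Pnk) auto

lemma util_a_eq:
  assumes "set_pmf gA \<subseteq> {1..}" and "finite (set_pmf gA)" and "0 < F v"
  shows "util_a F gA k v (nc, sz, vals, mates) =
    (if (\<forall>t<k - 1. mates t < v) \<and> rivals_below F v nc sz vals then v - beP F v (Pnk gA nc k) else 0)"
proof -
  have "(\<forall>j<nc - 1. beP F (Max (vals j ` {..<sz j})) (Pnk gA nc 1) < beP F v (Pnk gA nc 1))
      \<longleftrightarrow> rivals_below F v nc sz vals"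
    unfolding rivals_below_def using beP_Pnk_less_iff[OF assms(1,2) _ assms(3), where n=nc and k=1] by auto
  then show ?thesis unfolding util_a_def Let_def setcompr_eq_image by auto
qed

lemma util_b_eq:
  assumes "set_pmf gA \<subseteq> {1..}" and "finite (set_pmf gA)" and "0 < F v" and "2 \<le> k"
  shows "util_b F gA k v (nc, sz, vals, mates) =
    (if rivals_below F v nc sz vals \<and> (\<forall>t<k - 1. F (mates t) < F v)
     then v - beP F v (Pnk gA (nc - 1 + k) 1) else 0)"
proof -
  note less_iff = beP_Pnk_less_iff[OF assms(1,2) _ assms(3), where n="nc - 1 + k" and k=1]
  have "(\<forall>j<nc - 1. beP F (Max (vals j ` {..<sz j})) (Pnk gA (nc - 1 + k) 1)
          < beP F v (Pnk gA (nc - 1 + k) 1)) \<longleftrightarrow> rivals_below F v nc sz vals"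
    unfolding rivals_below_def using less_iff assms(4) by auto
  moreover have "(\<forall>t<k - 1. beP F (mates t) (Pnk gA (nc - 1 + k) 1) < beP F v (Pnk gA (nc - 1 + k) 1))
      \<longleftrightarrow> (\<forall>t<k - 1. F (mates t) < F v)"
    using less_iff assms(4) by auto
  ultimately show ?thesis unfolding util_b_def Let_def setcompr_eq_image ball_Un by auto
qed

lemma beP_Pnk_bounds:
  assumes "set_pmf g \<subseteq> {1..}" and "finite (set_pmf g)" and "2 \<le> k + (n - 1)" and "0 \<le> v"
  shows "0 \<le> beP F v (Pnk g n k)" and "beP F v (Pnk g n k) \<le> v"
proof -
  have "set_pmf (Pnk g n k) \<subseteq> {2..}"
    using set_pmf_Pnk_subset[OF assms(1), of n k] assms(3) by auto
  then show "0 \<le> beP F v (Pnk g n k)" and "beP F v (Pnk g n k) \<le> v"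
    using beP_bounds[OF finite_set_pmf_Pnk[OF assms(2)] _ assms(4)] by auto
qed

lemma util_a_bounds:
  assumes gA: "set_pmf gA \<subseteq> {1..}" "finite (set_pmf gA)" and Fv: "0 < F v" and k: "2 \<le> k"
  shows "0 \<le> util_a F gA k v \<omega>" and "util_a F gA k v \<omega> \<le> v"
proof -
  obtain nc sz vals mates where \<omega>: "\<omega> = (nc, sz, vals, mates)" by (cases \<omega>) auto
  have "0 \<le> beP F v (Pnk gA nc k)" "beP F v (Pnk gA nc k) \<le> v"
    using beP_Pnk_bounds[OF gA _ F_pos_imp_nonneg[OF Fv], of k nc] k by auto
  then show "0 \<le> util_a F gA k v \<omega>" "util_a F gA k v \<omega> \<le> v"
    unfolding \<omega> util_a_eq[OF gA Fv] using F_pos_imp_nonneg[OF Fv] by auto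
qed

lemma util_b_nonneg:
  assumes gA: "set_pmf gA \<subseteq> {1..}" "finite (set_pmf gA)" and Fv: "0 < F v" and k: "2 \<le> k"
  shows "0 \<le> util_b F gA k v \<omega>"
proof -
  obtain nc sz vals mates where \<omega>: "\<omega> = (nc, sz, vals, mates)" by (cases \<omega>) auto
  have "beP F v (Pnk gA (nc - 1 + k) 1) \<le> v"
    using beP_Pnk_bounds(2)[OF gA _ F_pos_imp_nonneg[OF Fv], of 1 "nc - 1 + k"] k by auto
  then show ?thesis unfolding \<omega> util_b_eq[OF gA Fv k] by simp
qed

lemma util_b_le_util_a:
  assumes gA: "set_pmf gA \<subseteq> {1..}" "finite (set_pmf gA)" and Fv: "0 < F v" and k: "2 \<le> k"
    and "beP F v (Pnk gA nc k) \<le> beP F v (Pnk gA (nc - 1 + k) 1)"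
  shows "util_b F gA k v (nc, sz, vals, mates) \<le> util_a F gA k v (nc, sz, vals, mates)"
  using assms F_less_imp_less util_a_bounds(1)[OF gA Fv k, of "(nc, sz, vals, mates)"]
  unfolding util_a_eq[OF gA Fv] util_b_eq[OF gA Fv k] by (auto split: if_splits)

lemma util_b_eq_util_a_minus:
  assumes gA: "set_pmf gA \<subseteq> {1..}" "finite (set_pmf gA)" and Fv: "0 < F v" and k: "2 \<le> k"
    and "rivals_below F v nc sz vals" and "\<forall>t<k - 1. F (mates t) < F v"
  shows "util_b F gA k v (nc, sz, vals, mates)
    = util_a F gA k v (nc, sz, vals, mates) - (beP F v (Pnk gA (nc - 1 + k) 1) - beP F v (Pnk gA nc k))"
  using assms F_less_imp_less unfolding util_a_eq[OF gA Fv] util_b_eq[OF gA Fv k] by auto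

lemma low_rivals_event_wins:
  assumes "(nc, sz, vals, mates) \<in> low_rivals_event n s c k" and "1 \<le> s" and "F c < F v"
  shows "nc = n" and "rivals_below F v nc sz vals" and "\<forall>t<k - 1. F (mates t) < F v"
proof -
  have below_c: "F x < F v" if "x \<le> c" for x
    using F_mono that assms(3) by (meson mono_def order.strict_trans1)
  show "nc = n" using assms(1) unfolding low_rivals_event_def by simp
  have "Max (vals j ` {..<s}) \<le> c" if "j < n - 1" for j
    using assms(1,2) that unfolding low_rivals_event_def by (subst Max_le_iff) (auto simp: lessThan_empty_iff)
  then show "rivals_below F v nc sz vals"
    using assms(1) below_c unfolding low_rivals_event_def rivals_below_def by auto
  show "\<forall>t<k - 1. F (mates t) < F v"
    using assms(1) below_c unfolding low_rivals_event_def by auto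
qed

lemma util_b_le_util_a_minus_indicator:
  assumes gA: "set_pmf gA \<subseteq> {1..}" "finite (set_pmf gA)" and Fv: "0 < F v" and k: "2 \<le> k"
    and premium: "\<And>n. 1 \<le> n \<Longrightarrow> beP F v (Pnk gA n k) < beP F v (Pnk gA (n - 1 + k) 1)"
    and "1 \<le> nc" and "1 \<le> s" and "F c < F v"
  shows "util_b F gA k v (nc, sz, vals, mates) \<le> util_a F gA k v (nc, sz, vals, mates)
    - (beP F v (Pnk gA (n - 1 + k) 1) - beP F v (Pnk gA n k)) * indicator (low_rivals_event n s c k) (nc, sz, vals, mates)"
proof (cases "(nc, sz, vals, mates) \<in> low_rivals_event n s c k")
  case True
  then show ?thesis
    using low_rivals_event_wins[OF True assms(7,8)] util_b_eq_util_a_minus[OF gA Fv k] by simp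
next
  case False
  then show ?thesis
    using util_b_le_util_a[OF gA Fv k less_imp_le[OF premium[OF assms(6)]]] by simp
qed

end

section \<open>Integration over the environment\<close>

lemma prob_space_env: "prob_space M \<Longrightarrow> prob_space (env gC gA M)"
  unfolding env_def by (intro prob_space_pair prob_space_PiM prob_space_measure_pmf)

lemma borel_measurable_component_PiM:
  "sets M = sets borel \<Longrightarrow> (\<lambda>f. f t) \<in> borel_measurable (PiM UNIV (\<lambda>_::nat. M))"
  using measurable_component_singleton[of t UNIV "\<lambda>_. M"] measurable_cong_sets[OF refl, of M borel] by blast

lemma measurable_rivals_below:
  assumes "sets M = sets borel" and [measurable]: "F \<in> borel_measurable borel"
  shows "Measurable.pred (env gC gA M) (\<lambda>(nc, sz, vals, mates). rivals_below F v nc sz vals)"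
proof -
  note [measurable] = borel_measurable_component_PiM[OF assms(1)]
  have size: "(\<lambda>\<omega>. fst (snd \<omega>) j) \<in> measurable (env gC gA M) (count_space UNIV)" for j
    unfolding env_def by measurable
  have count: "fst \<in> measurable (env gC gA M) (count_space UNIV)"
    unfolding env_def by measurable
  have fixed_size: "Measurable.pred (env gC gA M) (\<lambda>\<omega>. F (Max (fst (snd (snd \<omega>)) j ` {..<s})) < F v)" for j s
    unfolding env_def by measurable
  have "Measurable.pred (env gC gA M) (\<lambda>\<omega>. F (Max (fst (snd (snd \<omega>)) j ` {..<fst (snd \<omega>) j})) < F v)" for j
    by (rule measurable_compose_countable[OF fixed_size size])
  then have "Measurable.pred (env gC gA M) (\<lambda>\<omega>. \<forall>j<n - 1. F (Max (fst (snd (snd \<omega>)) j ` {..<fst (snd \<omega>) j})) < F v)" for n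
    by measurable
  from measurable_compose_countable[OF this count]
  show ?thesis unfolding rivals_below_def by (simp add: case_prod_beta')
qed

lemma (in valuation_cdf) integrable_util_a:
  assumes "prob_space M" and "sets M = sets borel"
    and gA: "set_pmf gA \<subseteq> {1..}" "finite (set_pmf gA)" and Fv: "0 < F v" and k: "2 \<le> k"
  shows "integrable (env gC gA M) (util_a F gA k v)"
proof -
  interpret prob_space "env gC gA M" using assms(1) by (rule prob_space_env)
  define mates_below where "mates_below \<omega> \<longleftrightarrow> (\<forall>t<k - 1. snd (snd (snd \<omega>)) t < v)" for \<omega> :: env_state
  define rivals where "rivals = (\<lambda>(nc, sz, vals, mates::nat \<Rightarrow> real). rivals_below F v nc sz vals)"
  define payoff where "payoff \<omega> = v - beP F v (Pnk gA (fst \<omega>) k)" for \<omega> :: env_state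
  note [measurable] = borel_measurable_component_PiM[OF assms(2)]
  have [measurable]: "F \<in> borel_measurable borel" using F_mono by (rule borel_measurable_mono)
  have [measurable]: "Measurable.pred (env gC gA M) rivals"
    unfolding rivals_def using assms(2) by (rule measurable_rivals_below) measurable
  have [measurable]: "Measurable.pred (env gC gA M) mates_below"
    unfolding env_def mates_below_def by measurable
  have "fst \<in> measurable (env gC gA M) (count_space UNIV)"
    unfolding env_def by measurable
  from measurable_compose[OF this, of "\<lambda>n. v - beP F v (Pnk gA n k)"]
  have [measurable]: "payoff \<in> borel_measurable (env gC gA M)"
    unfolding payoff_def by simp
  have "util_a F gA k v = (\<lambda>\<omega>. if mates_below \<omega> \<and> rivals \<omega> then payoff \<omega> else 0)"
    unfolding mates_below_def rivals_def payoff_def using util_a_eq[OF gA Fv] by (auto simp: fun_eq_iff)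
  moreover have "(\<lambda>\<omega>. if mates_below \<omega> \<and> rivals \<omega> then payoff \<omega> else 0) \<in> borel_measurable (env gC gA M)"
    by measurable
  moreover have "norm (util_a F gA k v \<omega>) \<le> v" for \<omega>
    using util_a_bounds[OF gA Fv k] by simp
  ultimately show ?thesis by (intro integrable_const_bound[where B=v]) auto
qed

lemma PiM_initial_segment:
  assumes "prob_space N" and "space N = UNIV" and "A \<in> sets N"
  shows "{f. \<forall>j<m. f j \<in> A} \<in> sets (PiM UNIV (\<lambda>_::nat. N))"
    and "emeasure (PiM UNIV (\<lambda>_::nat. N)) {f. \<forall>j<m. f j \<in> A} = emeasure N A ^ m"
proof -
  have eq: "{f. \<forall>j<m. f j \<in> A} = prod_emb UNIV (\<lambda>_. N) {..<m} (PiE {..<m} (\<lambda>_. A))"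
    using assms(2) by (auto simp: prod_emb_def PiE_iff)
  show "{f. \<forall>j<m. f j \<in> A} \<in> sets (PiM UNIV (\<lambda>_::nat. N))"
    unfolding eq using assms(3) by (intro sets_PiM_I) auto
  show "emeasure (PiM UNIV (\<lambda>_::nat. N)) {f. \<forall>j<m. f j \<in> A} = emeasure N A ^ m"
    unfolding eq using assms(1,3) by (subst emeasure_PiM_emb) auto
qed

lemma low_rivals_event_measure:
  assumes "real_distribution M" and "n \<in> set_pmf gC" and "s \<in> set_pmf gA" and "0 < cdf M c"
  shows "low_rivals_event n s c k \<in> sets (env gC gA M)"
    and "0 < measure (env gC gA M) (low_rivals_event n s c k)"
proof -
  interpret real_distribution M by (rule assms(1))
  define PV where "PV = PiM UNIV (\<lambda>_::nat. M)"
  have M: "space M = UNIV" "{..c} \<in> sets M" by (simp_all add: sets_eq_imp_space_eq)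
  have PV: "prob_space PV" "space PV = UNIV"
    unfolding PV_def by (auto intro: prob_space_PiM prob_space_axioms simp: space_PiM M)
  interpret PV: prob_space PV by (rule PV(1))
  interpret PVV: prob_space "PiM UNIV (\<lambda>_::nat. PV)" by (intro prob_space_PiM PV(1))
  interpret PA: prob_space "PiM UNIV (\<lambda>_::nat. measure_pmf gA)" by (intro prob_space_PiM prob_space_measure_pmf)
  interpret PVV_PV: prob_space "PiM UNIV (\<lambda>_::nat. PV) \<Otimes>\<^sub>M PV" by (intro prob_space_pair) unfold_locales
  interpret env: prob_space "env gC gA M" by (rule prob_space_env) unfold_locales
  interpret rest: prob_space "PiM UNIV (\<lambda>_::nat. measure_pmf gA) \<Otimes>\<^sub>M (PiM UNIV (\<lambda>_::nat. PV) \<Otimes>\<^sub>M PV)"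
    by (intro prob_space_pair) unfold_locales
  note sizes = PiM_initial_segment[OF prob_space_measure_pmf, of gA "{s}", simplified]
  note valuation = PiM_initial_segment[OF prob_space_axioms M]
  have vals_sets: "{f. \<forall>t<s. f t \<in> {..c}} \<in> sets PV"
    unfolding PV_def by (rule valuation(1))
  note vals = PiM_initial_segment[OF PV(1,2) vals_sets]
  have env: "env gC gA M = measure_pmf gC \<Otimes>\<^sub>M (PiM UNIV (\<lambda>_::nat. measure_pmf gA) \<Otimes>\<^sub>M (PiM UNIV (\<lambda>_::nat. PV) \<Otimes>\<^sub>M PV))"
    unfolding env_def PV_def ..
  let ?B = "{sz. \<forall>j<n - 1. sz j = s}" and ?C = "{vals. \<forall>j<n - 1. vals j \<in> {f. \<forall>t<s. f t \<in> {..c}}}"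
    and ?D = "{mates. \<forall>t<k - 1. mates t \<in> {..c}}"
  have B: "?B \<in> sets (PiM UNIV (\<lambda>_::nat. measure_pmf gA))" by (rule sizes(1))
  have C: "?C \<in> sets (PiM UNIV (\<lambda>_::nat. PV))" by (rule vals(1))
  have D: "?D \<in> sets PV" unfolding PV_def by (rule valuation(1))
  show "low_rivals_event n s c k \<in> sets (env gC gA M)"
    unfolding env low_rivals_event_def using B C D by (intro pair_measureI) auto
  have "emeasure (env gC gA M) (low_rivals_event n s c k)
      = emeasure (measure_pmf gC) {n} * (emeasure (PiM UNIV (\<lambda>_::nat. measure_pmf gA)) ?B *
          (emeasure (PiM UNIV (\<lambda>_::nat. PV)) ?C * emeasure PV ?D))"
    unfolding env low_rivals_event_def
    by (simp only: rest.emeasure_pair_measure_Times PVV_PV.emeasure_pair_measure_Times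
        PV.emeasure_pair_measure_Times B C D pair_measureI sets_measure_pmf UNIV_I)
  also have "\<dots> = pmf gC n * (ennreal (pmf gA s) ^ (n - 1) * ((ennreal (cdf M c) ^ s) ^ (n - 1) * ennreal (cdf M c) ^ (k - 1)))"
    unfolding sizes(2) vals(2) valuation(2)[folded PV_def]
    by (simp add: emeasure_pmf_single cdf_def emeasure_eq_measure)
  also have "\<dots> \<noteq> 0"
    using assms(2-4) by (simp add: set_pmf_iff)
  finally show "0 < measure (env gC gA M) (low_rivals_event n s c k)"
    by (simp add: env.emeasure_eq_measure zero_less_measure_iff)
qed

lemma AE_env_coordinators:
  assumes "prob_space M"
  shows "AE \<omega> in env gC gA M. fst \<omega> \<in> set_pmf gC"
proof -
  define R where "R = PiM UNIV (\<lambda>_::nat. measure_pmf gA) \<Otimes>\<^sub>M (PiM UNIV (\<lambda>_::nat. PiM UNIV (\<lambda>_::nat. M)) \<Otimes>\<^sub>M PiM UNIV (\<lambda>_::nat. M))"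
  interpret R: prob_space R
    unfolding R_def using assms by (intro prob_space_pair prob_space_PiM prob_space_measure_pmf) auto
  have "- set_pmf gC \<in> null_sets (measure_pmf gC)"
    by (simp add: null_sets_def measure_pmf.emeasure_eq_measure measure_pmf_zero_iff)
  then have "(- set_pmf gC) \<times> space R \<in> null_sets (env gC gA M)"
    unfolding env_def R_def[symmetric] by (intro R.times_in_null_sets1) auto
  then show ?thesis
    by (rule AE_I') (auto simp: env_def R_def[symmetric] space_pair_measure)
qed

lemma (in finite_measure) integral_less_of_le_minus_indicator:
  fixes f g :: "'a \<Rightarrow> real"
  assumes "integrable M f" and "A \<in> sets M" and "0 < measure M A" and "0 < \<delta>"
    and "AE x in M. 0 \<le> g x" and "AE x in M. g x \<le> f x - \<delta> * indicator A x"
  shows "(\<integral>x. g x \<partial>M) < (\<integral>x. f x \<partial>M)"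
proof -
  have int: "integrable M (\<lambda>x. f x - \<delta> * indicator A x)"
    using assms(1,2) by (intro Bochner_Integration.integrable_diff integrable_mult_right integrable_real_indicator)
      (auto simp: emeasure_eq_measure)
  have "(\<integral>x. g x \<partial>M) \<le> (\<integral>x. f x - \<delta> * indicator A x \<partial>M)"
    using assms(5,6) by (intro integral_mono_AE'[OF int]) (auto elim: AE_mp)
  also have "\<dots> = (\<integral>x. f x \<partial>M) - \<delta> * measure M A"
    using assms(1,2) int by (subst Bochner_Integration.integral_diff) (auto simp: emeasure_eq_measure)
  also have "\<dots> < (\<integral>x. f x \<partial>M)"
    using assms(3,4) by simp
  finally show ?thesis .
qed

theorem theorem2:
  fixes M :: "real measure" and gC gA :: "nat pmf" and kappa k :: nat and v :: real
  assumes "real_distribution M"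
    and "\<forall>x. isCont (cdf M) x"
    and "\<forall>x<0. cdf M x = 0"
    and "pmf gC 0 = 0" and "pmf gC 1 = 0"
    and "2 \<le> kappa" and "set_pmf gA \<subseteq> {1..kappa}" and "pmf gA 1 < 1"
    and "\<forall>P P' w. set_pmf P \<subseteq> {2..} \<and> set_pmf P' \<subseteq> {2..} \<and> dist_less P P' \<and> 0 < cdf M w
                 \<longrightarrow> beP (cdf M) w P < beP (cdf M) w P'"
    and "2 \<le> k"
    and "0 < cdf M v"
  shows "(\<integral>\<omega>. util_b (cdf M) gA k v \<omega> \<partial>env gC gA M)
           < (\<integral>\<omega>. util_a (cdf M) gA k v \<omega> \<partial>env gC gA M)"
proof -
  interpret valuation_cdf "cdf M" using assms(1-3) by (rule valuation_cdf_cdf)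
  interpret real_distribution M by (rule assms(1))
  interpret env: prob_space "env gC gA M" by (rule prob_space_env) unfold_locales
  have gA: "set_pmf gA \<subseteq> {1..}" "finite (set_pmf gA)"
    using assms(7) finite_subset[OF assms(7)] by auto
  have premium: "beP (cdf M) v (Pnk gA n k) < beP (cdf M) v (Pnk gA (n - 1 + k) 1)" if "1 \<le> n" for n
    using assms(9,11) by (intro Pnk_less_split_club[OF _ set_pmf_Max[OF assms(7,8)] that assms(10)]) blast
  have coordinators: "1 \<le> n" if "n \<in> set_pmf gC" for n
    using that assms(4) by (cases n) (auto simp: set_pmf_iff)
  obtain n where n: "n \<in> set_pmf gC" using set_pmf_not_empty by fast
  obtain s where s: "s \<in> set_pmf gA" using set_pmf_not_empty by fast
  obtain c where c: "0 < cdf M c" "cdf M c < cdf M v" using obtain_F_between[OF assms(11)] .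
  define \<delta> where "\<delta> = beP (cdf M) v (Pnk gA (n - 1 + k) 1) - beP (cdf M) v (Pnk gA n k)"
  have "AE \<omega> in env gC gA M. util_b (cdf M) gA k v \<omega> \<le> util_a (cdf M) gA k v \<omega> - \<delta> * indicator (low_rivals_event n s c k) \<omega>"
    using AE_env_coordinators[OF prob_space_axioms]
  proof eventually_elim
    case (elim \<omega>)
    obtain nc sz vals mates where \<omega>: "\<omega> = (nc, sz, vals, mates)" by (cases \<omega>)
    show ?case unfolding \<omega> \<delta>_def
      by (rule util_b_le_util_a_minus_indicator[OF gA assms(11,10) premium])
        (use coordinators[OF elim] s gA c(2) in \<open>auto simp: \<omega>\<close>)
  qed
  then show ?thesis
    using low_rivals_event_measure[OF assms(1) n s c(1)] premium[OF coordinators[OF n]]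
      util_b_nonneg[OF gA assms(11,10)]
    by (intro env.integral_less_of_le_minus_indicator[where \<delta>=\<delta>] integrable_util_a prob_space_axioms
        events_eq_borel gA assms(10,11)) (auto simp: \<delta>_def)
qed

end
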